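(* Let $c\in(0,1)$ and let $\sigma>0$ satisfy $C_{\mathrm{BS}}(\sigma)=c$. For $y>0$ define $$G(y)=d_1^{-1}\!\left(\Phi^{-1}\!\left(\frac{c}{C_{\mathcal D}(y)}\right)\right).$$ If $U\ge\sigma$ (i.e. $U$ is an upper bound of the implied volatility, e.g. $U=U(c)$ for an upper-bound function $U$), then $c/C_{\mathcal D}(U)\in(0,1)$, $G(U)$ is well defined, and $$L_2(c)\le G(U)\le\sigma,\qquad\text{where } L_2(c)=d_1^{-1}(\Phi^{-1}(c)).$$
   Context: Fix $k\ge 0$. Let $\Phi$ and $\phi$ denote the standard normal distribution function and density. For $\sigma>0$ put $d_1(\sigma)=-k/\sigma+\sigma/2$, $d_2(\sigma)=-k/\sigma-\sigma/2$, and $C_{\mathrm{BS}}(\sigma)=\Phi(d_1(\sigma))-e^k\,\Phi(d_2(\sigma))$, a strictly increasing bijection from $(0,\infty)$ onto $(0,1)$; for $c\in(0,1)$ the implied volatility is the unique $\sigma>0$ with $C_{\mathrm{BS}}(\sigma)=c$. The price-to-delta ratio is $C_{\mathcal D}(y)=C_{\mathrm{BS}}(y)/\Phi(d_1(y))$. The function $d_1^{-1}(x)=x+\sqrt{x^2+2k}$ (which equals $2\max(x,0)$ when $k=0$) is the inverse of $d_1$. *)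

theory Defs
  imports "HOL-Probability.Probability"
begin

definition Phi :: "real \<Rightarrow> real" where
  "Phi x = (LBINT t:{..x}. std_normal_density t)"

definition Phi_inv :: "real \<Rightarrow> real" where
  "Phi_inv p = (THE x. Phi x = p)"

definition d1 :: "real \<Rightarrow> real \<Rightarrow> real" where
  "d1 k \<sigma> = - k / \<sigma> + \<sigma> / 2"

definition d2 :: "real \<Rightarrow> real \<Rightarrow> real" where
  "d2 k \<sigma> = - k / \<sigma> - \<sigma> / 2"

definition C_BS :: "real \<Rightarrow> real \<Rightarrow> real" where
  "C_BS k \<sigma> = Phi (d1 k \<sigma>) - exp k * Phi (d2 k \<sigma>)"

definition C_D :: "real \<Rightarrow> real \<Rightarrow> real" where
  "C_D k y = C_BS k y / Phi (d1 k y)"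

definition d1_inv :: "real \<Rightarrow> real \<Rightarrow> real" where
  "d1_inv k x = x + sqrt (x\<^sup>2 + 2 * k)"

definition G :: "real \<Rightarrow> real \<Rightarrow> real \<Rightarrow> real" where
  "G k c y = d1_inv k (Phi_inv (c / C_D k y))"

definition L2 :: "real \<Rightarrow> real \<Rightarrow> real" where
  "L2 k c = d1_inv k (Phi_inv c)"

end

theory Submission
  imports Defs "HOL-Real_Asymp.Real_Asymp"
begin

text \<open>The heart of the matter is that the price-to-delta ratio
  \<open>C_D(y) = 1 - e\<^sup>k \<Phi>(d\<^sub>2(y)) / \<Phi>(d\<^sub>1(y))\<close> is nondecreasing in \<open>y\<close>. Since
  \<open>d\<^sub>1' = -d\<^sub>2/y\<close> and \<open>d\<^sub>2' = -d\<^sub>1/y\<close>, this reduces to the monotonicity of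
  \<open>x \<Phi>(x) / \<phi>(x)\<close>, which in turn follows from Gordon's lower bound
  \<open>\<Phi>(x) \<ge> -x \<phi>(x) / (1 + x\<^sup>2)\<close>. Hence for \<open>U \<ge> \<sigma>\<close> we get
  \<open>c / \<Phi>(d\<^sub>1(\<sigma>)) = C_D(\<sigma>) \<le> C_D(U) \<le> 1\<close>, i.e. \<open>c \<le> c / C_D(U) \<le> \<Phi>(d\<^sub>1(\<sigma>))\<close>;
  applying the increasing maps \<open>\<Phi>\<^sup>-\<^sup>1\<close> and \<open>d\<^sub>1\<^sup>-\<^sup>1\<close> gives \<open>L\<^sub>2(c) \<le> G(U) \<le> \<sigma>\<close>.\<close>

abbreviation phi :: "real \<Rightarrow> real" where
  "phi \<equiv> std_normal_density"

lemma Phi_eq_cdf: "Phi x = cdf std_normal_distribution x"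
proof -
  have "cdf std_normal_distribution x = integral\<^sup>L std_normal_distribution (indicator {..x})"
    by (simp add: cdf_def)
  also have "\<dots> = integral\<^sup>L lborel (\<lambda>t. phi t *\<^sub>R indicator {..x} t)"
    by (rule integral_density) auto
  finally show ?thesis
    unfolding Phi_def set_lebesgue_integral_def by (simp add: mult.commute)
qed

interpretation std_normal: real_distribution std_normal_distribution
  by (rule real_dist_normal_dist)

lemma tendsto_Phi_at_top: "(Phi \<longlongrightarrow> 1) at_top"
  using std_normal.cdf_lim_at_top_prob by (simp add: Phi_eq_cdf[abs_def])

lemma tendsto_Phi_at_bot: "(Phi \<longlongrightarrow> 0) at_bot"
  using std_normal.cdf_lim_at_bot by (simp add: Phi_eq_cdf[abs_def])

lemma Phi_nonneg: "0 \<le> Phi x"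
  by (simp add: Phi_eq_cdf std_normal.cdf_nonneg)

lemma Phi_le_1: "Phi x \<le> 1"
  by (simp add: Phi_eq_cdf std_normal.cdf_bounded_prob)

lemma continuous_on_std_normal_density: "continuous_on S phi"
  unfolding std_normal_density_def by (intro continuous_intros) auto

lemma std_normal_density_pos: "0 < phi x"
  by (rule normal_density_pos) simp

lemma Phi_diff_eq_integral:
  assumes "a < x"
  shows "Phi x - Phi a = integral {a..x} phi"
proof -
  have "Phi x - Phi a = measure std_normal_distribution {a<..x}"
    unfolding Phi_eq_cdf using std_normal.cdf_diff_eq[OF assms] .
  also have "\<dots> = integral\<^sup>L std_normal_distribution (indicator {a<..x})"
    by simp
  also have "\<dots> = integral\<^sup>L lborel (\<lambda>t. phi t *\<^sub>R indicator {a<..x} t)"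
    by (rule integral_density) auto
  also have "\<dots> = (LBINT t=a..x. phi t)"
    using assms by (simp add: interval_integral_Ioc set_lebesgue_integral_def mult.commute)
  also have "\<dots> = integral {a..x} phi"
    using assms
    by (intro interval_integral_eq_integral borel_integrable_atLeastAtMost'
        continuous_on_std_normal_density) auto
  finally show ?thesis .
qed

lemma has_real_derivative_Phi: "(Phi has_real_derivative phi x) (at x)"
proof -
  let ?a = "x - 1" and ?b = "x + 1"
  have "((\<lambda>u. integral {?a..u} phi) has_vector_derivative phi x) (at x within {?a..?b})"
    by (intro integral_has_vector_derivative continuous_on_std_normal_density) auto
  then have "((\<lambda>u. Phi ?a + integral {?a..u} phi) has_real_derivative phi x) (at x)"
    by (auto intro!: derivative_eq_intros
        simp: has_real_derivative_iff_has_vector_derivative at_within_Icc_at)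
  then show ?thesis
  proof (rule has_field_derivative_transform_within_open[where S = "{?a<..<?b}"])
    fix u assume "u \<in> {?a<..<?b}"
    then show "Phi ?a + integral {?a..u} phi = Phi u"
      using Phi_diff_eq_integral[of ?a u] by auto
  qed auto
qed

lemma has_real_derivative_std_normal_density:
  "(phi has_real_derivative - x * phi x) (at x)"
  unfolding std_normal_density_def
  by (auto intro!: derivative_eq_intros simp: power2_eq_square field_simps)

lemma has_real_derivative_Phi_comp [derivative_intros]:
  "(f has_real_derivative f') (at x within S) \<Longrightarrow>
    ((\<lambda>x. Phi (f x)) has_real_derivative phi (f x) * f') (at x within S)"
  using DERIV_chain2[OF has_real_derivative_Phi] by blast

lemma has_real_derivative_std_normal_density_comp [derivative_intros]:
  "(f has_real_derivative f') (at x within S) \<Longrightarrow>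
    ((\<lambda>x. phi (f x)) has_real_derivative - f x * phi (f x) * f') (at x within S)"
  using DERIV_chain2[OF has_real_derivative_std_normal_density] by blast

lemma Phi_strict_mono: "a < b \<Longrightarrow> Phi a < Phi b"
  by (rule DERIV_pos_imp_increasing[where f = Phi])
    (auto intro: has_real_derivative_Phi std_normal_density_pos)

lemma Phi_le_iff: "Phi a \<le> Phi b \<longleftrightarrow> a \<le> b"
  using Phi_strict_mono[of a b] Phi_strict_mono[of b a]
  by (cases a b rule: linorder_cases) auto

lemma Phi_pos: "0 < Phi x"
  using Phi_strict_mono[of "x - 1" x] Phi_nonneg[of "x - 1"] by linarith

lemma Phi_less_1: "Phi x < 1"
  using Phi_strict_mono[of x "x + 1"] Phi_le_1[of "x + 1"] by linarith

lemma Phi_surj: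
  assumes "0 < p" "p < 1"
  obtains x where "Phi x = p"
proof -
  obtain a where a: "Phi a < p"
    using order_tendstoD(2)[OF tendsto_Phi_at_bot assms(1)]
    by (auto simp: eventually_at_bot_linorder)
  obtain b where b: "p < Phi b"
    using order_tendstoD(1)[OF tendsto_Phi_at_top assms(2)]
    by (auto simp: eventually_at_top_linorder)
  have "a \<le> b"
    using a b Phi_le_iff by force
  then show ?thesis
    using IVT[of Phi a p b] a b that by (force intro: DERIV_isCont has_real_derivative_Phi)
qed

lemma Phi_Phi_inv:
  assumes "0 < p" "p < 1"
  shows "Phi (Phi_inv p) = p"
proof -
  obtain x where x: "Phi x = p"
    using Phi_surj[OF assms] .
  then have "\<exists>!x. Phi x = p"
    using Phi_le_iff by (metis order_antisym order_refl)
  then show ?thesis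
    unfolding Phi_inv_def by (rule theI')
qed

lemma Phi_inv_le_iff:
  assumes "0 < p" "p < 1"
  shows "Phi_inv p \<le> x \<longleftrightarrow> p \<le> Phi x"
  using Phi_le_iff[of "Phi_inv p" x] by (simp add: Phi_Phi_inv[OF assms])

lemma Phi_inv_mono:
  assumes "0 < p" "p \<le> q" "q < 1"
  shows "Phi_inv p \<le> Phi_inv q"
  using assms by (simp add: Phi_inv_le_iff Phi_Phi_inv)

text \<open>Gordon's inequality. The left-hand side has derivative \<open>2 \<phi>(x) / (1 + x\<^sup>2)\<^sup>2 > 0\<close>
  and tends to \<open>0\<close> at \<open>-\<infinity>\<close>.\<close>

lemma Phi_ge_Gordon_bound: "- x * phi x / (1 + x\<^sup>2) \<le> Phi x"
proof -
  let ?q = "\<lambda>x. Phi x + x * phi x / (1 + x\<^sup>2)"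
  have deriv: "(?q has_real_derivative 2 * phi t / (1 + t\<^sup>2)\<^sup>2) (at t)" for t
  proof -
    have pos: "1 + t\<^sup>2 \<noteq> 0"
      by (smt (verit) zero_le_power2)
    show ?thesis
      apply (rule derivative_eq_intros refl | simp add: pos)+
      using pos by (simp add: divide_simps) (simp add: algebra_simps power2_eq_square)
  qed
  have "((\<lambda>x. x * phi x / (1 + x\<^sup>2)) \<longlongrightarrow> 0) at_bot"
    unfolding std_normal_density_def by real_asymp
  then have lim: "(?q \<longlongrightarrow> 0) at_bot"
    using tendsto_add[OF tendsto_Phi_at_bot] by simp
  have "\<forall>\<^sub>F y in at_bot. ?q y \<le> ?q x"
    unfolding eventually_at_bot_linorder
  proof (intro exI allI impI)
    fix y assume "y \<le> x"
    then show "?q y \<le> ?q x"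
      by (rule DERIV_nonneg_imp_nondecreasing)
        (use deriv std_normal_density_pos in \<open>auto intro!: exI\<close>)
  qed
  then have "0 \<le> ?q x"
    using tendsto_le[OF trivial_limit_at_bot_linorder tendsto_const lim] by blast
  then show ?thesis
    by simp
qed

lemma mult_Phi_div_density_mono:
  assumes "a \<le> b"
  shows "a * Phi a / phi a \<le> b * Phi b / phi b"
proof (rule DERIV_nonneg_imp_nondecreasing[OF assms], intro allI impI exI conjI)
  fix x :: real
  have p: "0 < phi x"
    by (rule std_normal_density_pos)
  have s: "0 < 1 + x\<^sup>2"
    by (smt (verit) zero_le_power2)
  show "((\<lambda>x. x * Phi x / phi x) has_real_derivative
      ((1 + x\<^sup>2) * Phi x + x * phi x) / phi x) (at x)"
  proof (rule derivative_eq_intros refl | use p in \<open>rule less_imp_neq[symmetric]\<close>)+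
    have "(1 * Phi x + phi x * 1 * x) * phi x - x * Phi x * (- x * phi x * 1) =
        phi x * ((1 + x\<^sup>2) * Phi x + x * phi x)"
      by (simp add: algebra_simps power2_eq_square)
    then show "((1 * Phi x + phi x * 1 * x) * phi x - x * Phi x * (- x * phi x * 1)) /
        (phi x * phi x) = ((1 + x\<^sup>2) * Phi x + x * phi x) / phi x"
      using p by simp
  qed
  have "0 \<le> (1 + x\<^sup>2) * Phi x + x * phi x"
    using Phi_ge_Gordon_bound[of x] s by (simp add: field_simps)
  then show "0 \<le> ((1 + x\<^sup>2) * Phi x + x * phi x) / phi x"
    using p by simp
qed

lemma d2_le_d1: "0 < y \<Longrightarrow> d2 k y \<le> d1 k y"
  unfolding d1_def d2_def by simp

lemma has_real_derivative_d1: "0 < y \<Longrightarrow> (d1 k has_real_derivative - d2 k y / y) (at y)"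
  unfolding d1_def[abs_def] d2_def
  by (auto intro!: derivative_eq_intros simp: power2_eq_square field_simps)

lemma has_real_derivative_d2: "0 < y \<Longrightarrow> (d2 k has_real_derivative - d1 k y / y) (at y)"
  unfolding d1_def d2_def[abs_def]
  by (auto intro!: derivative_eq_intros simp: power2_eq_square field_simps)

lemma Phi_d2_div_Phi_d1_antimono:
  assumes "0 < s" "s \<le> u"
  shows "Phi (d2 k u) / Phi (d1 k u) \<le> Phi (d2 k s) / Phi (d1 k s)"
proof (rule DERIV_nonpos_imp_nonincreasing[OF assms(2)])
  fix y assume "s \<le> y" "y \<le> u"
  then have y: "0 < y"
    using assms by auto
  define a where "a = d1 k y"
  define b where "b = d2 k y"
  have "((\<lambda>y. Phi (d2 k y) / Phi (d1 k y)) has_real_derivative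
      (phi b * (- a / y) * Phi a - Phi b * (phi a * (- b / y))) / (Phi a * Phi a)) (at y)"
    unfolding a_def b_def
    using DERIV_divide[OF has_real_derivative_Phi_comp[OF has_real_derivative_d2[OF y]]
        has_real_derivative_Phi_comp[OF has_real_derivative_d1[OF y]]] Phi_pos
    by (simp add: less_imp_neq[symmetric])
  moreover have "b * Phi b * phi a \<le> a * Phi a * phi b"
    using mult_Phi_div_density_mono[of b a] d2_le_d1[OF y] std_normal_density_pos[of a]
      std_normal_density_pos[of b]
    by (simp add: a_def b_def divide_simps)
  then have "(phi b * (- a / y) * Phi a - Phi b * (phi a * (- b / y))) / (Phi a * Phi a) \<le> 0"
    using y by (intro divide_nonpos_nonneg) (simp_all add: field_simps)
  ultimately show "\<exists>D. ((\<lambda>y. Phi (d2 k y) / Phi (d1 k y)) has_real_derivative D) (at y) \<and> D \<le> 0"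
    by blast
qed

lemma C_D_eq: "C_D k y = 1 - exp k * (Phi (d2 k y) / Phi (d1 k y))"
  using Phi_pos[of "d1 k y"] unfolding C_D_def C_BS_def by (simp add: field_simps)

lemma C_D_le_1: "C_D k y \<le> 1"
  unfolding C_D_eq using Phi_pos Phi_nonneg by simp

lemma C_D_mono: "0 < s \<Longrightarrow> s \<le> u \<Longrightarrow> C_D k s \<le> C_D k u"
  unfolding C_D_eq using mult_left_mono[OF Phi_d2_div_Phi_d1_antimono[of s u k], of "exp k"]
  by simp

lemma d1_inv_mono:
  assumes "0 \<le> k" "x \<le> y"
  shows "d1_inv k x \<le> d1_inv k y"
proof -
  let ?s = "sqrt (y\<^sup>2 + 2 * k)"
  have s0: "0 \<le> ?s" and sy: "- y \<le> ?s"
    using assms by (auto intro!: real_le_rsqrt simp: power2_eq_square)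
  have "(y - x) * (- y) \<le> (y - x) * ?s"
    using sy assms by (intro mult_left_mono) auto
  moreover have "(?s + (y - x))\<^sup>2 = y\<^sup>2 + 2 * k + 2 * (y - x) * ?s + (y - x)\<^sup>2"
    using assms by (simp add: power2_eq_square algebra_simps)
  ultimately have "x\<^sup>2 + 2 * k \<le> (?s + (y - x))\<^sup>2"
    by (simp add: power2_eq_square algebra_simps)
  then have "sqrt (x\<^sup>2 + 2 * k) \<le> ?s + (y - x)"
    using s0 assms by (intro real_le_lsqrt) auto
  then show ?thesis
    unfolding d1_inv_def by simp
qed

lemma d1_inv_d1:
  assumes "0 \<le> k" "0 < s"
  shows "d1_inv k (d1 k s) = s"
proof -
  have "(d1 k s)\<^sup>2 + 2 * k = (k / s + s / 2)\<^sup>2"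
    unfolding d1_def using assms by (simp add: power2_eq_square field_simps)
  moreover have "0 \<le> k / s + s / 2"
    using assms by simp
  ultimately show ?thesis
    unfolding d1_inv_def d1_def by simp
qed

theorem proposition5:
  fixes k c \<sigma> U :: real
  assumes "k \<ge> 0" and "0 < c" and "c < 1"
    and "\<sigma> > 0" and "C_BS k \<sigma> = c"
    and "U \<ge> \<sigma>"
  shows "0 < c / C_D k U \<and> c / C_D k U < 1 \<and> L2 k c \<le> G k c U \<and> G k c U \<le> \<sigma>"
proof -
  define r where "r = c / C_D k U"
  have "c / Phi (d1 k \<sigma>) = C_D k \<sigma>"
    using assms(5) by (simp add: C_D_def)
  also have "\<dots> \<le> C_D k U"
    using assms by (intro C_D_mono)
  finally have low: "c / Phi (d1 k \<sigma>) \<le> C_D k U" .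
  moreover have "c < c / Phi (d1 k \<sigma>)"
    using assms(2) Phi_pos Phi_less_1 by (simp add: field_simps)
  ultimately have "c < C_D k U" and "0 < C_D k U"
    using assms(2) by linarith+
  then have r: "0 < r" "r < 1" "c \<le> r" "r \<le> Phi (d1 k \<sigma>)"
    using assms(2) low C_D_le_1[of k U] Phi_pos[of "d1 k \<sigma>"]
    by (auto simp: r_def field_simps)
  have "L2 k c \<le> G k c U"
    unfolding L2_def G_def r_def[symmetric]
    using assms r by (intro d1_inv_mono Phi_inv_mono) auto
  moreover have "G k c U \<le> d1_inv k (d1 k \<sigma>)"
    unfolding G_def r_def[symmetric]
    using assms r by (intro d1_inv_mono) (auto simp: Phi_inv_le_iff)
  ultimately show ?thesis
    using r d1_inv_d1[OF assms(1,4)] by (simp add: r_def)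
qed

end
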